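(* Let $r\ge1$ be an integer, $\beta\in(0,1)$, and let $\psi$ be a measurable function on $\mathbb{R}$ for which all convolutions and integrals in the definition of $\mathcal{R}_{\beta'}[\psi]$ converge absolutely for every $\beta'\in(0,1)$ (e.g. $\psi\in\mathcal{E}_D$ with $z_1,z_2$ as in Proposition 4.1). If $\mathcal{R}_\beta[\psi]=\psi$, then $\mathcal{R}_{\beta^n}[\psi]=\psi$ for every $n\in\mathbb{N}$.
   Context: Convolution: $(f\bullet g)(y)=\int_{\mathbb{R}}f(x)g(y-x)\,dx$; $(\psi\circ(-))(x)=\psi(-x)$; $\bar\psi$ is the complex conjugate; $h^{\bullet r}$ is the $r$-fold convolution. For $\beta\in(0,1)$, $$\mathcal{R}_\beta[\psi](\eta)=\frac{e^{i(1-\beta^{-2})\eta^2}}{\beta^{\frac{r-1}{r}}}\psi\!\left(\frac{\eta}{\beta}\right)+\operatorname{sign}(\eta)\frac{2ie^{i\eta^2}}{|\eta|^{\frac{r-1}{r}}}\int_{\eta}^{\eta/\beta}e^{-i\zeta^2}\frac{\big(\psi\bullet(\psi\bullet\overline{\psi\circ(-)})^{\bullet r}\big)(\zeta)}{|\zeta|^{1/r}}\,d\zeta .$$ $\mathcal{E}_D=\{f\text{ measurable}: |f(x)|\le D|x|^{z_1}e^{-|x|}\ (|x|\le1),\ |f(x)|\le D|x|^{z_2}e^{-|x|}\ (|x|>1)\}$ with $-1<z_1<-\frac{2r}{2r+1}$, $z_2<-1$. *)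

theory Defs
  imports "HOL-Analysis.Analysis"
begin

definition conv :: "(real \<Rightarrow> complex) \<Rightarrow> (real \<Rightarrow> complex) \<Rightarrow> real \<Rightarrow> complex" where
  "conv f g y = integral\<^sup>L lborel (\<lambda>x. f x * g (y - x))"

definition conv_abs_conv :: "(real \<Rightarrow> complex) \<Rightarrow> (real \<Rightarrow> complex) \<Rightarrow> bool" where
  "conv_abs_conv f g \<longleftrightarrow> (AE y in lborel. integrable lborel (\<lambda>x. f x * g (y - x)))"

text \<open>r-fold convolution h^{\<bullet> r} (r \<ge> 1); the value for r = 0 is irrelevant.\<close>
fun conv_pow :: "(real \<Rightarrow> complex) \<Rightarrow> nat \<Rightarrow> real \<Rightarrow> complex" where
  "conv_pow h 0 = (\<lambda>_. 0)"
| "conv_pow h (Suc 0) = h"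
| "conv_pow h (Suc (Suc n)) = conv h (conv_pow h (Suc n))"

definition psi_tilde :: "(real \<Rightarrow> complex) \<Rightarrow> real \<Rightarrow> complex" where
  "psi_tilde \<psi> = conv \<psi> (\<lambda>x. cnj (\<psi> (- x)))"

definition Phi :: "nat \<Rightarrow> (real \<Rightarrow> complex) \<Rightarrow> real \<Rightarrow> complex" where
  "Phi r \<psi> = conv \<psi> (conv_pow (psi_tilde \<psi>) r)"

definition R_integrand :: "nat \<Rightarrow> (real \<Rightarrow> complex) \<Rightarrow> real \<Rightarrow> complex" where
  "R_integrand r \<psi> \<zeta> = exp (- \<i> * complex_of_real (\<zeta>\<^sup>2)) * Phi r \<psi> \<zeta>
       / complex_of_real (\<bar>\<zeta>\<bar> powr (1 / real r))"

text \<open>The operator R_\<beta>; the oriented integral \<integral>_\<eta>^{\<eta>/\<beta>} is the interval Lebesgue integral.\<close>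
definition R_op :: "nat \<Rightarrow> real \<Rightarrow> (real \<Rightarrow> complex) \<Rightarrow> real \<Rightarrow> complex" where
  "R_op r \<beta> \<psi> \<eta> =
     exp (\<i> * complex_of_real ((1 - 1 / \<beta>\<^sup>2) * \<eta>\<^sup>2))
       / complex_of_real (\<beta> powr ((real r - 1) / real r)) * \<psi> (\<eta> / \<beta>)
   + complex_of_real (sgn \<eta>) * (2 * \<i> * exp (\<i> * complex_of_real (\<eta>\<^sup>2)))
       / complex_of_real (\<bar>\<eta>\<bar> powr ((real r - 1) / real r))
       * interval_lebesgue_integral lborel (ereal \<eta>) (ereal (\<eta> / \<beta>)) (R_integrand r \<psi>)"

definition R_abs_conv :: "nat \<Rightarrow> (real \<Rightarrow> complex) \<Rightarrow> bool" where
  "R_abs_conv r \<psi> \<longleftrightarrow>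
     conv_abs_conv \<psi> (\<lambda>x. cnj (\<psi> (- x)))
   \<and> (\<forall>k. 1 \<le> k \<and> k < r \<longrightarrow> conv_abs_conv (psi_tilde \<psi>) (conv_pow (psi_tilde \<psi>) k))
   \<and> conv_abs_conv \<psi> (conv_pow (psi_tilde \<psi>) r)
   \<and> (\<forall>\<beta>'\<in>{0<..<1}. \<forall>\<eta>. interval_lebesgue_integrable lborel (ereal \<eta>) (ereal (\<eta> / \<beta>'))
                                (R_integrand r \<psi>))"

end

theory Submission
  imports Defs
begin

text \<open>For \<eta> \<noteq> 0 the fixed-point equation \<open>R_op r \<beta> \<psi> = \<psi>\<close> says that the gauge
  \<open>G(x) = e^{-ix^2} |x|^{(r-1)/r} \<psi>(x)\<close> satisfies
  \<open>G(\<eta>) = G(\<eta>/\<beta>) + 2i sgn(\<eta>) \<integral>_\<eta>^{\<eta>/\<beta>} F\<close>, with \<open>F\<close> the \<zeta>-integrand.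
  Since \<open>\<eta>/\<beta>\<close> has the sign of \<eta>, this identity can be applied again at \<open>\<eta>/\<beta>\<close>, and the
  integrals over the adjacent intervals \<open>[\<eta>/\<beta>^k, \<eta>/\<beta>^{k+1}]\<close> add up, which gives the same
  identity with \<open>\<beta>^n\<close>; that is the fixed-point equation for \<open>\<beta>^n\<close>.\<close>

definition R_gauge :: "nat \<Rightarrow> (real \<Rightarrow> complex) \<Rightarrow> real \<Rightarrow> complex" where
  "R_gauge r \<psi> x =
     exp (- \<i> * complex_of_real (x\<^sup>2)) * complex_of_real (\<bar>x\<bar> powr ((real r - 1) / real r)) * \<psi> x"

lemma interval_integral_sum_between:
  fixes a b c :: real
  assumes between: "a \<le> b \<and> b \<le> c \<or> c \<le> b \<and> b \<le> a"
    and integrable: "interval_lebesgue_integrable lborel (ereal a) (ereal c) f"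
  shows "(LBINT x=ereal a..ereal b. f x) + (LBINT x=ereal b..ereal c. f x) = (LBINT x=ereal a..ereal c. f x)"
proof (rule interval_integral_sum)
  from between consider "a \<le> c" "min a (min b c) = a" "max a (max b c) = c"
    | "c \<le> a" "min a (min b c) = c" "max a (max b c) = a"
    by linarith
  then show "interval_lebesgue_integrable lborel
      (min (ereal a) (min (ereal b) (ereal c))) (max (ereal a) (max (ereal b) (ereal c))) f"
    by cases (use integrable interval_integrable_endpoints_reverse in auto)
qed

lemma mult_between:
  fixes \<eta> s t :: real
  assumes "1 \<le> s" "s \<le> t"
  shows "\<eta> \<le> \<eta> * s \<and> \<eta> * s \<le> \<eta> * t \<or> \<eta> * t \<le> \<eta> * s \<and> \<eta> * s \<le> \<eta>"
proof (cases "0 \<le> \<eta>")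
  case True
  then show ?thesis using assms mult_left_mono[of 1 s \<eta>] mult_left_mono[of s t \<eta>] by simp
next
  case False
  then show ?thesis using assms mult_left_mono_neg[of 1 s \<eta>] mult_left_mono_neg[of s t \<eta>] by simp
qed

lemma dilation_identity_power:
  fixes g f :: "real \<Rightarrow> complex" and c :: complex and \<beta> :: real
  assumes \<beta>: "0 < \<beta>" "\<beta> < 1"
    and integrable: "\<And>b \<eta>. b \<in> {0<..<1} \<Longrightarrow>
           interval_lebesgue_integrable lborel (ereal \<eta>) (ereal (\<eta> / b)) f"
    and identity: "\<And>x. x \<noteq> 0 \<Longrightarrow>
           g x = g (x / \<beta>) + c * complex_of_real (sgn x) * (LBINT t=ereal x..ereal (x / \<beta>). f t)"
    and "\<eta> \<noteq> 0"
  shows "g \<eta> = g (\<eta> / \<beta> ^ k) + c * complex_of_real (sgn \<eta>) * (LBINT t=ereal \<eta>..ereal (\<eta> / \<beta> ^ k). f t)"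
proof (induction k)
  case 0
  then show ?case by simp
next
  case (Suc k)
  let ?I = "\<lambda>a b. LBINT t=ereal a..ereal b. f t"
  have step: "g (\<eta> / \<beta> ^ k) = g (\<eta> / \<beta> ^ Suc k)
      + c * complex_of_real (sgn \<eta>) * ?I (\<eta> / \<beta> ^ k) (\<eta> / \<beta> ^ Suc k)"
    using identity[of "\<eta> / \<beta> ^ k"] \<open>\<eta> \<noteq> 0\<close> \<beta> by (simp add: sgn_divide mult.commute)
  have "1 \<le> 1 / \<beta> ^ k" "1 / \<beta> ^ k \<le> 1 / \<beta> ^ Suc k"
    using \<beta> by (simp_all add: power_le_one field_simps)
  moreover have "\<beta> ^ Suc k \<in> {0<..<1}"
    using \<beta> by (simp add: power_less_one_iff del: power_Suc)
  ultimately have additive: "?I \<eta> (\<eta> / \<beta> ^ k) + ?I (\<eta> / \<beta> ^ k) (\<eta> / \<beta> ^ Suc k) = ?I \<eta> (\<eta> / \<beta> ^ Suc k)"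
    using mult_between[of "1 / \<beta> ^ k" "1 / \<beta> ^ Suc k" \<eta>] integrable[of "\<beta> ^ Suc k" \<eta>]
    by (intro interval_integral_sum_between) simp_all
  show ?case using Suc.IH step additive[symmetric] by (simp add: algebra_simps)
qed

lemma R_op_eq_R_gauge:
  assumes "0 < b" "\<eta> \<noteq> 0"
  shows "R_op r b \<psi> \<eta> =
     exp (\<i> * complex_of_real (\<eta>\<^sup>2)) / complex_of_real (\<bar>\<eta>\<bar> powr ((real r - 1) / real r))
     * (R_gauge r \<psi> (\<eta> / b) + 2 * \<i> * complex_of_real (sgn \<eta>)
          * (LBINT t=ereal \<eta>..ereal (\<eta> / b). R_integrand r \<psi> t))"
proof -
  define p where "p = (real r - 1) / real r"
  have phase: "exp (\<i> * complex_of_real ((1 - 1 / b\<^sup>2) * \<eta>\<^sup>2)) =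
      exp (\<i> * complex_of_real (\<eta>\<^sup>2)) * exp (- \<i> * complex_of_real ((\<eta> / b)\<^sup>2))"
    by (simp add: exp_add[symmetric] power_divide algebra_simps)
  have weight: "\<bar>\<eta> / b\<bar> powr p = \<bar>\<eta>\<bar> powr p / b powr p"
    using assms by (simp add: powr_divide)
  show ?thesis
    using assms unfolding R_op_def R_gauge_def p_def[symmetric] phase weight
    by (simp add: field_simps)
qed

lemma R_gauge_inverse:
  assumes "\<eta> \<noteq> 0"
  shows "\<psi> \<eta> =
     exp (\<i> * complex_of_real (\<eta>\<^sup>2)) / complex_of_real (\<bar>\<eta>\<bar> powr ((real r - 1) / real r))
     * R_gauge r \<psi> \<eta>"
proof -
  have "exp (\<i> * complex_of_real (\<eta>\<^sup>2)) * exp (- \<i> * complex_of_real (\<eta>\<^sup>2)) = 1"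
    by (simp add: exp_add[symmetric])
  then show ?thesis
    using assms unfolding R_gauge_def by (simp add: field_simps)
qed

lemma R_op_fixed_point_iff_R_gauge:
  assumes "0 < b" "\<eta> \<noteq> 0"
  shows "R_op r b \<psi> \<eta> = \<psi> \<eta> \<longleftrightarrow>
     R_gauge r \<psi> \<eta> = R_gauge r \<psi> (\<eta> / b)
       + 2 * \<i> * complex_of_real (sgn \<eta>) * (LBINT t=ereal \<eta>..ereal (\<eta> / b). R_integrand r \<psi> t)"
proof -
  let ?E = "exp (\<i> * complex_of_real (\<eta>\<^sup>2)) / complex_of_real (\<bar>\<eta>\<bar> powr ((real r - 1) / real r))"
  have "?E \<noteq> 0" using assms by simp
  then show ?thesis
    using assms R_op_eq_R_gauge[of b \<eta> r \<psi>] R_gauge_inverse[of \<eta> \<psi> r]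
    by (simp add: eq_commute[of "R_gauge r \<psi> \<eta>"])
qed

lemma R_op_at_zero: "R_op r b \<psi> 0 = \<psi> 0 / complex_of_real (b powr ((real r - 1) / real r))"
  unfolding R_op_def by simp

lemma eq_divide_power:
  fixes x a :: "'a::field"
  assumes "x = x / a"
  shows "x = x / a ^ n"
proof (induction n)
  case (Suc n)
  have "x / a ^ Suc n = x / a ^ n / a" by (simp add: divide_divide_eq_left mult.commute)
  then show ?case using Suc.IH assms by simp
qed simp

theorem lemma5p1:
  fixes r :: nat and \<beta> :: real and \<psi> :: "real \<Rightarrow> complex"
  assumes "r \<ge> 1"
    and "\<beta> \<in> {0<..<1}"
    and "\<psi> \<in> borel_measurable lborel"
    and "R_abs_conv r \<psi>"
    and "R_op r \<beta> \<psi> = \<psi>"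
  shows "\<forall>n::nat. n \<ge> 1 \<longrightarrow> R_op r (\<beta> ^ n) \<psi> = \<psi>"
proof (intro allI impI ext)
  fix n :: nat and \<eta> :: real
  have \<beta>: "0 < \<beta>" "\<beta> < 1" using assms(2) by auto
  show "R_op r (\<beta> ^ n) \<psi> \<eta> = \<psi> \<eta>"
  proof (cases "\<eta> = 0")
    case True
    let ?p = "(real r - 1) / real r"
    have "\<psi> 0 = \<psi> 0 / complex_of_real (\<beta> powr ?p)"
      using R_op_at_zero[of r \<beta> \<psi>] assms(5) by simp
    moreover have "(\<beta> ^ n) powr ?p = (\<beta> powr ?p) ^ n"
      using \<beta> by (simp add: powr_realpow[symmetric] powr_powr powr_power mult.commute)
    ultimately show ?thesis
      using True eq_divide_power R_op_at_zero by (metis of_real_power)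
  next
    case False
    have "R_op r \<beta> \<psi> x = \<psi> x" for x using assms(5) by simp
    then have "R_gauge r \<psi> \<eta> = R_gauge r \<psi> (\<eta> / \<beta> ^ n) + 2 * \<i> * complex_of_real (sgn \<eta>)
        * (LBINT t=ereal \<eta>..ereal (\<eta> / \<beta> ^ n). R_integrand r \<psi> t)"
      using \<beta> assms(4) False unfolding R_abs_conv_def
      by (intro dilation_identity_power[where f = "R_integrand r \<psi>"])
        (auto simp: R_op_fixed_point_iff_R_gauge[symmetric])
    then show ?thesis using \<beta> False by (simp add: R_op_fixed_point_iff_R_gauge)
  qed
qed

end
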